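(* Let $p$ be an odd prime, $G=\mu_p\times\mu_p$, and let $\mathcal{P}$ be a fusion partition of $G$ having exactly $p$ singular sets and such that every non-singular set has exactly two elements. Then there exist $\alpha,\beta\in G$ such that the singular sets are exactly $\{\alpha^i\}$, $i=0,\dots,p-1$, and the non-singular sets are exactly the sets $\{\alpha^i\beta^j,\alpha^i\beta^{-j}\}$ with $0\le i\le p-1$ and $1\le j\le p-1$.
   Context: A unital partition of a finite commutative group $G$ is a partition $G=\{1\}\sqcup A_0\sqcup\dots\sqcup A_s$ such that, with $a_i=\sum_{x\in A_i}x\in\mathbb{Z}[G]$, the $\mathbb{Z}$-span of $1$ and the $a_i$ is closed under multiplication in $\mathbb{Z}[G]$. It is a fusion partition if moreover (1) for each member $A_i$ the set $\{x^{-1}:x\in A_i\}$ is a member, denoted $A_{i^*}$, and (2) writing $a_ia_j=\sum_kn^k_{i,j}a_k$, one has $n^k_{i,j}|A_k|=n^{j^*}_{i,k^*}|A_{j^*}|$. A member of a partition is singular if it has exactly one element (the set $\{1\}$ counts as singular). *)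

theory Defs
  imports "HOL-Analysis.Analysis" "HOL-Computational_Algebra.Primes"
begin

type_synonym elt = "complex \<times> complex"

definition mu2 :: "nat \<Rightarrow> elt set" where
  "mu2 p = {(z, w). z ^ p = 1 \<and> w ^ p = 1}"

definition gone :: elt where "gone = (1, 1)"

definition gmul :: "elt \<Rightarrow> elt \<Rightarrow> elt" where
  "gmul x y = (fst x * fst y, snd x * snd y)"

definition ginv :: "elt \<Rightarrow> elt" where
  "ginv x = (inverse (fst x), inverse (snd x))"

definition gpow :: "elt \<Rightarrow> nat \<Rightarrow> elt" where
  "gpow x i = (fst x ^ i, snd x ^ i)"

text \<open>Elements of the group ring Z[G] are integer-valued functions on G
  (zero outside G); product is convolution.\<close>

definition ind :: "elt set \<Rightarrow> elt \<Rightarrow> int" where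
  "ind A = (\<lambda>x. if x \<in> A then 1 else 0)"

definition conv :: "elt set \<Rightarrow> (elt \<Rightarrow> int) \<Rightarrow> (elt \<Rightarrow> int) \<Rightarrow> elt \<Rightarrow> int" where
  "conv G f g = (\<lambda>z. \<Sum>x\<in>G. f x * g (gmul (ginv x) z))"

definition is_partition_with_one :: "elt set \<Rightarrow> elt set set \<Rightarrow> bool" where
  "is_partition_with_one G P \<longleftrightarrow>
     (\<forall>A\<in>P. A \<noteq> {} \<and> A \<subseteq> G) \<and> \<Union>P = G \<and>
     (\<forall>A\<in>P. \<forall>B\<in>P. A \<noteq> B \<longrightarrow> A \<inter> B = {}) \<and> {gone} \<in> P"

definition zspan :: "elt set set \<Rightarrow> (elt \<Rightarrow> int) set" where
  "zspan P = {f. \<exists>c :: elt set \<Rightarrow> int. f = (\<lambda>x. \<Sum>C\<in>P. c C * ind C x)}"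

definition unital_partition :: "elt set \<Rightarrow> elt set set \<Rightarrow> bool" where
  "unital_partition G P \<longleftrightarrow> is_partition_with_one G P \<and>
     (\<forall>f\<in>zspan P. \<forall>g\<in>zspan P. conv G f g \<in> zspan P)"

text \<open>Structure constant n^C_{A,B}: coefficient of the class sum of C in a_A a_B,
  i.e. the (block-constant) value of a_A a_B at an element of C.\<close>
definition struct_const :: "elt set \<Rightarrow> elt set \<Rightarrow> elt set \<Rightarrow> elt set \<Rightarrow> int" where
  "struct_const G A B C = conv G (ind A) (ind B) (SOME x. x \<in> C)"

definition fusion_partition :: "elt set \<Rightarrow> elt set set \<Rightarrow> bool" where
  "fusion_partition G P \<longleftrightarrow> unital_partition G P \<and>
     (\<forall>A\<in>P. ginv ` A \<in> P) \<and>
     (\<forall>A\<in>P. \<forall>B\<in>P. \<forall>C\<in>P.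
        struct_const G A B C * int (card C) =
        struct_const G A (ginv ` C) (ginv ` B) * int (card (ginv ` B)))"

definition singular :: "elt set \<Rightarrow> bool" where
  "singular A \<longleftrightarrow> card A = 1"

end

theory Submission
  imports Defs
begin

(* Let H be the set of elements
   forming singular blocks and S the set of z with {z, z^-1} a block.  Computing products of
   block sums in Z[G] shows:
   (1) H is a subgroup and translation by H permutes the blocks;
   (2) every two-element block {x, y} has x y in H, hence (using that squaring is bijective in
       a group of odd exponent) it is a translate c {z, z^-1} with c in H, z in S - {1};
   (3) S is a subgroup with S \<inter> H = {1}.  In the locale prime_pair_partition,
   where |H| = p is prime, H is generated by any alpha <> 1 in H, and for any beta <> 1 in S the
   products alpha^a beta^b (a, b < p) are distinct, hence exhaust G; so S consists of the powers
   of beta. *)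

section \<open>The group of pairs of p-th roots of unity\<close>

lemma mu2_eq: "mu2 p = {z. z ^ p = 1} \<times> {w. w ^ p = 1}"
  by (auto simp: mu2_def)

lemma finite_mu2: "p > 0 \<Longrightarrow> finite (mu2 p)"
  unfolding mu2_eq by (intro finite_cartesian_product finite_roots_unity) auto

lemma card_mu2: "p > 0 \<Longrightarrow> card (mu2 p) = p * p"
  unfolding mu2_eq by (simp add: card_cartesian_product card_roots_unity_eq)

lemma mu2_nonzero: "p > 0 \<Longrightarrow> x \<in> mu2 p \<Longrightarrow> fst x \<noteq> 0 \<and> snd x \<noteq> 0"
  by (cases p) (auto simp: mu2_def)

lemma gone_mem: "gone \<in> mu2 p"
  by (simp add: mu2_def gone_def)

lemma gmul_mem: "x \<in> mu2 p \<Longrightarrow> y \<in> mu2 p \<Longrightarrow> gmul x y \<in> mu2 p"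
  by (auto simp: mu2_def gmul_def power_mult_distrib)

lemma ginv_mem: "x \<in> mu2 p \<Longrightarrow> ginv x \<in> mu2 p"
  by (auto simp: mu2_def ginv_def power_inverse)

lemma gpow_mem:
  assumes "x \<in> mu2 p"
  shows "gpow x n \<in> mu2 p"
proof -
  have "(a ^ n) ^ p = (a ^ p) ^ n" for a :: complex
    by (simp flip: power_mult add: mult.commute)
  thus ?thesis
    using assms by (auto simp: mu2_def gpow_def)
qed

lemma gmul_comm: "gmul x y = gmul y x"
  by (simp add: gmul_def mult.commute)

lemma gmul_gone [simp]: "gmul gone x = x" "gmul x gone = x"
  by (simp_all add: gmul_def gone_def)

lemma ginv_gone [simp]: "ginv gone = gone"
  by (simp add: ginv_def gone_def)

lemma ginv_ginv [simp]: "ginv (ginv x) = x"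
  by (simp add: ginv_def)

lemma ginv_gmul: "ginv (gmul x y) = gmul (ginv x) (ginv y)"
  by (simp add: ginv_def gmul_def)

lemma gpow_0 [simp]: "gpow x 0 = gone"
  by (simp add: gpow_def gone_def)

lemma gpow_Suc: "gpow x (Suc n) = gmul x (gpow x n)"
  by (simp add: gpow_def gmul_def)

lemma gpow_add: "gpow x (m + n) = gmul (gpow x m) (gpow x n)"
  by (simp add: gpow_def gmul_def power_add)

lemma gpow_gmul: "gpow (gmul x y) n = gmul (gpow x n) (gpow y n)"
  by (simp add: gpow_def gmul_def power_mult_distrib)

lemma gpow_ginv: "gpow (ginv x) n = ginv (gpow x n)"
  by (simp add: gpow_def ginv_def power_inverse)

lemma gpow_exponent: "x \<in> mu2 p \<Longrightarrow> gpow x p = gone"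
  by (auto simp: gpow_def mu2_def gone_def)

lemma gmul_ginv: "p > 0 \<Longrightarrow> x \<in> mu2 p \<Longrightarrow> gmul x (ginv x) = gone"
  by (drule (1) mu2_nonzero) (simp add: gmul_def ginv_def gone_def)

lemma ginv_unique: "p > 0 \<Longrightarrow> x \<in> mu2 p \<Longrightarrow> gmul x y = gone \<Longrightarrow> y = ginv x"
  by (drule (1) mu2_nonzero) (auto simp: gmul_def ginv_def gone_def prod_eq_iff field_simps)

lemma ginv_cancel_left: "p > 0 \<Longrightarrow> x \<in> mu2 p \<Longrightarrow> gmul (ginv x) (gmul x y) = y"
  by (drule (1) mu2_nonzero) (simp add: gmul_def ginv_def prod_eq_iff)

lemma cancel_ginv_left: "p > 0 \<Longrightarrow> x \<in> mu2 p \<Longrightarrow> gmul x (gmul (ginv x) y) = y"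
  by (drule (1) mu2_nonzero) (simp add: gmul_def ginv_def prod_eq_iff)

lemma gmul_left_cancel: "p > 0 \<Longrightarrow> c \<in> mu2 p \<Longrightarrow> gmul c x = gmul c y \<longleftrightarrow> x = y"
  by (drule (1) mu2_nonzero) (auto simp: gmul_def prod_eq_iff)

text \<open>For odd p squaring is a bijection of the group, inverted by the power (p+1)/2.
  This is what forces the two elements of a non-singular block to be symmetric about
  a singular element.\<close>
lemma sqrt_of_square:
  assumes "odd p" "x \<in> mu2 p"
  shows "gpow (gmul x x) ((p + 1) div 2) = x"
proof -
  have "gpow (gmul x x) ((p + 1) div 2) = gpow x (2 * ((p + 1) div 2))"
    by (simp add: gpow_def gmul_def power_mult power2_eq_square)
  also have "2 * ((p + 1) div 2) = p + 1"
    using assms(1) by simp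
  also have "gpow x (p + 1) = x"
    using gpow_exponent[OF assms(2)] by (simp add: gpow_def gone_def prod_eq_iff)
  finally show ?thesis .
qed

lemma square_of_sqrt:
  "odd p \<Longrightarrow> x \<in> mu2 p \<Longrightarrow> gmul (gpow x ((p + 1) div 2)) (gpow x ((p + 1) div 2)) = x"
  by (metis gpow_gmul sqrt_of_square)

lemma square_inj: "odd p \<Longrightarrow> x \<in> mu2 p \<Longrightarrow> y \<in> mu2 p \<Longrightarrow> gmul x x = gmul y y \<Longrightarrow> x = y"
  by (metis sqrt_of_square)

lemma square_eq_gone: "odd p \<Longrightarrow> x \<in> mu2 p \<Longrightarrow> gmul x x = gone \<Longrightarrow> x = gone"
  by (metis sqrt_of_square gpow_def gone_def fst_conv snd_conv power_one)

lemma ginv_fixed: "odd p \<Longrightarrow> x \<in> mu2 p \<Longrightarrow> ginv x = x \<Longrightarrow> x = gone"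
  using gmul_ginv[of p x] square_eq_gone[of p x] by (metis odd_pos)

lemma root_of_unity_coprime:
  fixes z :: complex
  assumes "z ^ p = 1" "z ^ k = 1" "coprime k p" "k > 0"
  shows "z = 1"
proof -
  obtain a b where "k * a = p * b + gcd k p"
    using bezout_nat[of k p] assms(4) by auto
  hence "z ^ (k * a) = z ^ (p * b) * z"
    using assms(3) by (simp add: power_add)
  thus ?thesis
    using assms by (simp add: power_mult)
qed

lemma gpow_inj_on:
  assumes "prime p" "x \<in> mu2 p" "x \<noteq> gone"
  shows "inj_on (gpow x) {..<p}"
proof (rule linorder_inj_onI')
  fix i j assume ij: "i \<in> {..<p}" "j \<in> {..<p}" "i < j"
  have p0: "p > 0"
    using assms(1) prime_gt_0_nat by blast
  have "coprime (j - i) p"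
    using ij prime_imp_coprime[OF assms(1), of "j - i"] dvd_imp_le[of p "j - i"]
    by (force simp: coprime_commute)
  hence "gpow x (j - i) \<noteq> gone"
    using assms(2,3) ij(3) root_of_unity_coprime[of "fst x" p "j - i"]
      root_of_unity_coprime[of "snd x" p "j - i"]
    by (auto simp: mu2_def gpow_def gone_def prod_eq_iff)
  hence "gmul (gpow x i) (gpow x (j - i)) \<noteq> gmul (gpow x i) gone"
    using gmul_left_cancel[OF p0 gpow_mem[OF assms(2)]] by blast
  thus "gpow x i \<noteq> gpow x j"
    using ij(3) gpow_add[of x i "j - i"] by simp
qed

section \<open>Products with indicator functions in the group ring\<close>

lemma conv_ind:
  assumes "finite G" "A \<subseteq> G"
  shows "conv G (ind A) g z = (\<Sum>a\<in>A. g (gmul (ginv a) z))"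
proof -
  have "conv G (ind A) g z = (\<Sum>x\<in>G. if x \<in> A then g (gmul (ginv x) z) else 0)"
    unfolding conv_def ind_def by (intro sum.cong) auto
  also have "\<dots> = (\<Sum>x\<in>A. g (gmul (ginv x) z))"
    using assms by (simp add: sum.If_cases Int_absorb1)
  finally show ?thesis .
qed

lemma conv_ind_singleton:
  "finite G \<Longrightarrow> a \<in> G \<Longrightarrow> conv G (ind {a}) g z = g (gmul (ginv a) z)"
  using conv_ind[of G "{a}"] by simp

lemma conv_ind_pair:
  "finite G \<Longrightarrow> {a, b} \<subseteq> G \<Longrightarrow> a \<noteq> b \<Longrightarrow>
     conv G (ind {a, b}) g z = g (gmul (ginv a) z) + g (gmul (ginv b) z)"
  using conv_ind[of G "{a, b}"] by simp

section \<open>Unital partitions into blocks of size at most two\<close>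

locale pair_partition =
  fixes p :: nat and P :: "elt set set"
  assumes odd: "odd p"
    and unital: "unital_partition (mu2 p) P"
    and small_blocks: "\<forall>A\<in>P. \<not> singular A \<longrightarrow> card A = 2"
begin

abbreviation G :: "elt set" where "G \<equiv> mu2 p"

lemma p_pos: "p > 0"
  using odd by presburger

lemma finite_G: "finite G"
  using finite_mu2 p_pos by blast

lemma block_subset: "A \<in> P \<Longrightarrow> A \<subseteq> G"
  and block_nonempty: "A \<in> P \<Longrightarrow> A \<noteq> {}"
  and block_exists: "x \<in> G \<Longrightarrow> \<exists>B\<in>P. x \<in> B"
  and one_block: "{gone} \<in> P"
  using unital by (auto simp: unital_partition_def is_partition_with_one_def)

lemma block_unique: "A \<in> P \<Longrightarrow> B \<in> P \<Longrightarrow> x \<in> A \<Longrightarrow> x \<in> B \<Longrightarrow> A = B"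
  using unital unfolding unital_partition_def is_partition_with_one_def by blast

lemma finite_P: "finite P"
  using finite_subset[of P "Pow G"] block_subset finite_G by blast

lemma finite_block: "A \<in> P \<Longrightarrow> finite A"
  using block_subset finite_G finite_subset by blast

lemma card_block: "A \<in> P \<Longrightarrow> card A = 1 \<or> card A = 2"
  using small_blocks by (auto simp: singular_def)

lemmas ginv_cancel = ginv_cancel_left[OF p_pos] cancel_ginv_left[OF p_pos]

lemma span_value:
  assumes "B \<in> P" "x \<in> B"
  shows "(\<Sum>C\<in>P. c C * ind C x) = c B"
proof -
  have "(\<Sum>C\<in>P. c C * ind C x) = c B * ind B x + (\<Sum>C\<in>P - {B}. c C * ind C x)"
    using finite_P assms(1) by (simp add: sum.remove)
  also have "(\<Sum>C\<in>P - {B}. c C * ind C x) = 0"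
  proof (intro sum.neutral ballI)
    fix C assume "C \<in> P - {B}"
    hence "x \<notin> C"
      using block_unique assms by blast
    thus "c C * ind C x = 0"
      by (simp add: ind_def)
  qed
  finally show ?thesis
    using assms by (simp add: ind_def)
qed

lemma ind_in_span:
  assumes "A \<in> P"
  shows "ind A \<in> zspan P"
proof -
  have "(\<Sum>C\<in>P. (if C = A then 1 else 0) * ind C x) = ind A x" for x
    using finite_P assms by (simp add: if_distrib[of "\<lambda>c. c * _"] sum.delta cong: if_cong)
  thus ?thesis
    unfolding zspan_def by (intro CollectI exI[of _ "\<lambda>C. if C = A then 1 else 0"]) auto
qed

lemma product_block_constant:
  assumes "A \<in> P" "B \<in> P" "C \<in> P" "x \<in> C" "y \<in> C"
  shows "conv G (ind A) (ind B) x = conv G (ind A) (ind B) y"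
proof -
  have "conv G (ind A) (ind B) \<in> zspan P"
    using unital ind_in_span assms(1,2) by (auto simp: unital_partition_def)
  then obtain c where "conv G (ind A) (ind B) = (\<lambda>x. \<Sum>C\<in>P. c C * ind C x)"
    unfolding zspan_def by blast
  thus ?thesis
    using span_value assms(3-5) by simp
qed

definition H :: "elt set" where "H = {x. {x} \<in> P}"

lemma H_subset: "x \<in> H \<Longrightarrow> x \<in> G"
  using block_subset by (auto simp: H_def)

lemma gone_H: "gone \<in> H"
  using one_block by (simp add: H_def)

lemma singleton_block_H: "B \<in> P \<Longrightarrow> x \<in> B \<Longrightarrow> card B = 1 \<Longrightarrow> x \<in> H"
  by (elim card_1_singletonE) (simp add: H_def)

lemma partner_exists:
  assumes "x \<in> G" "x \<notin> H"
  obtains y where "y \<noteq> x" "{x, y} \<in> P"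
proof -
  obtain B where B: "B \<in> P" "x \<in> B"
    using block_exists assms(1) by blast
  have "card B = 2"
    using card_block B singleton_block_H assms(2) by blast
  then obtain a b where ab: "B = {a, b}" "a \<noteq> b"
    by (auto simp: card_2_iff)
  let ?y = "if a = x then b else a"
  have "?y \<noteq> x" "B = {x, ?y}"
    using ab B(2) by auto
  thus ?thesis
    using that B(1) by metis
qed

text \<open>Multiplying \<open>a_{{h}}\<close> with \<open>a_A\<close> shows that the block of \<open>h a\<close> lies in the translate \<open>h A\<close>.\<close>
lemma block_in_translate:
  assumes h: "h \<in> H" and A: "A \<in> P" "a \<in> A" and B: "B \<in> P" "gmul h a \<in> B"
  shows "B \<subseteq> gmul h ` A"
proof
  fix w assume w: "w \<in> B"
  have hG: "h \<in> G"
    using h H_subset by blast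
  let ?f = "conv G (ind {h}) (ind A)"
  have f: "?f z = ind A (gmul (ginv h) z)" for z
    using conv_ind_singleton[OF finite_G hG] .
  have "?f w = ?f (gmul h a)"
    using h A B w by (intro product_block_constant) (auto simp: H_def)
  also have "\<dots> = 1"
    using f ginv_cancel(1)[OF hG] A(2) by (simp add: ind_def)
  finally have "gmul (ginv h) w \<in> A"
    using f by (simp add: ind_def split: if_splits)
  moreover have "w = gmul h (gmul (ginv h) w)"
    using ginv_cancel(2)[OF hG] by simp
  ultimately show "w \<in> gmul h ` A"
    by blast
qed

lemma H_mul: assumes "h \<in> H" "k \<in> H" shows "gmul h k \<in> H"
proof -
  have "gmul h k \<in> G"
    using assms H_subset gmul_mem by blast
  then obtain B where B: "B \<in> P" "gmul h k \<in> B"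
    using block_exists by blast
  have "{k} \<in> P"
    using assms(2) by (simp add: H_def)
  hence "B \<subseteq> {gmul h k}"
    using block_in_translate[OF assms(1) _ singletonI B] by simp
  hence "B = {gmul h k}"
    using B(2) by blast
  thus ?thesis
    using B(1) by (simp add: H_def)
qed

lemma H_pow: "h \<in> H \<Longrightarrow> gpow h n \<in> H"
  by (induction n) (auto simp: gone_H gpow_Suc H_mul)

lemma H_inv: assumes "h \<in> H" shows "ginv h \<in> H"
proof -
  have hG: "h \<in> G"
    using assms H_subset by blast
  have "gmul h (gpow h (p - 1)) = gone"
    using p_pos gpow_exponent[OF hG] by (metis gpow_Suc Suc_diff_1)
  hence "gpow h (p - 1) = ginv h"
    using ginv_unique[OF p_pos hG] by blast
  thus ?thesis
    using H_pow assms by metis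
qed

lemma translate_block:
  assumes h: "h \<in> H" and A: "A \<in> P"
  shows "gmul h ` A \<in> P"
proof -
  have hG: "h \<in> G"
    using h H_subset by blast
  obtain a where a: "a \<in> A"
    using block_nonempty A by blast
  have "gmul h a \<in> G"
    using gmul_mem hG a A block_subset by blast
  then obtain B where B: "B \<in> P" "gmul h a \<in> B"
    using block_exists by blast
  have sub: "B \<subseteq> gmul h ` A"
    using block_in_translate[OF h A a B] .
  have "inj_on (gmul h) A"
    using gmul_left_cancel[OF p_pos hG] by (auto intro: inj_onI)
  hence card_eq: "card (gmul h ` A) = card A"
    by (rule card_image)
  have "card B > 0"
    using B finite_block[OF B(1)] card_gt_0_iff by blast
  have "card A \<le> card B"
  proof (cases "card A = 1")
    case False
    have "gmul h a \<notin> H"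
    proof
      assume "gmul h a \<in> H"
      hence "gmul (ginv h) (gmul h a) \<in> H"
        by (rule H_mul[OF H_inv[OF h]])
      hence "{a} \<in> P"
        using ginv_cancel(1)[OF hG] by (simp add: H_def)
      hence "A = {a}"
        using block_unique[OF A] a by blast
      with False show False
        by simp
    qed
    hence "card B \<noteq> 1"
      using B singleton_block_H by blast
    thus ?thesis
      using card_block[OF A] card_block[OF B(1)] by linarith
  qed (use \<open>card B > 0\<close> in linarith)
  hence "B = gmul h ` A"
    using card_seteq[OF _ sub] finite_block[OF A] card_eq by simp
  thus ?thesis
    using B(1) by simp
qed

text \<open>The product of the two elements of a two-element block is singular: otherwise
  \<open>a_A^2\<close>, which takes the value 2 at \<open>x y\<close>, would force \<open>x^2 = y^2\<close>.\<close>
lemma pair_product_in_H: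
  assumes A: "{x, y} \<in> P" "x \<noteq> y"
  shows "gmul x y \<in> H"
proof (rule ccontr)
  assume notH: "gmul x y \<notin> H"
  have xG: "x \<in> G" and yG: "y \<in> G"
    using block_subset[OF A(1)] by auto
  obtain w where w: "w \<noteq> gmul x y" "{gmul x y, w} \<in> P"
    using partner_exists[OF gmul_mem[OF xG yG] notH] by blast
  let ?f = "conv G (ind {x, y}) (ind {x, y})"
  have f: "?f z = ind {x, y} (gmul (ginv x) z) + ind {x, y} (gmul (ginv y) z)" for z
    using conv_ind_pair[OF finite_G] block_subset[OF A(1)] A(2) by blast
  have "gmul (ginv y) (gmul x y) = x"
    using ginv_cancel(1)[OF yG] gmul_comm by metis
  hence "?f (gmul x y) = 2"
    using f ginv_cancel(1)[OF xG] by (simp add: ind_def)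
  moreover have "?f w = ?f (gmul x y)"
    by (rule product_block_constant[OF A(1) A(1) w(2)]) simp_all
  ultimately have in_x: "gmul (ginv x) w \<in> {x, y}" and in_y: "gmul (ginv y) w \<in> {x, y}"
    using f[of w] by (auto simp: ind_def split: if_splits)
  have wx: "w = gmul x (gmul (ginv x) w)" and wy: "w = gmul y (gmul (ginv y) w)"
    using ginv_cancel(2)[OF xG] ginv_cancel(2)[OF yG] by simp_all
  have "gmul (ginv x) w = x"
    using in_x w(1) wx by auto
  moreover have "gmul (ginv y) w = y"
    using in_y w(1) wy gmul_comm[of y x] by auto
  ultimately have "gmul x x = gmul y y"
    using wx wy by simp
  hence "x = y"
    using square_inj[OF odd xG yG] by simp
  with A(2) show False ..
qed

lemma H_sqrt: "u \<in> G \<Longrightarrow> gmul u u \<in> H \<Longrightarrow> u \<in> H"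
  using sqrt_of_square[OF odd, of u] H_pow by metis

text \<open>S collects the elements z for which \<open>{z, z\<inverse>}\<close> is a block; every two-element
  block will turn out to be a translate of such an inverse pair by a singular element.\<close>

definition S :: "elt set" where "S = {z \<in> G. {z, ginv z} \<in> P}"

lemma S_subset: "z \<in> S \<Longrightarrow> z \<in> G"
  by (simp add: S_def)

lemma gone_S: "gone \<in> S"
  using one_block gone_mem by (simp add: S_def)

lemma S_inv: "z \<in> S \<Longrightarrow> ginv z \<in> S"
  using ginv_mem by (auto simp: S_def insert_commute)

lemma S_inter_H: assumes "z \<in> S" "z \<in> H" shows "z = gone"
proof -
  have "{z} = {z, ginv z}"
    using block_unique[of "{z}" "{z, ginv z}" z] assms by (auto simp: S_def H_def)
  thus ?thesis
    using ginv_fixed[OF odd S_subset[OF assms(1)]] by auto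
qed

text \<open>A nontrivial translate \<open>h u\<close> (h singular) of an element of S is not in S: the block of
  \<open>h u\<close> is \<open>{h u, h u\<inverse>}\<close>, and it can only be an inverse pair if \<open>h\<^sup>2 = 1\<close>.\<close>
lemma S_translate:
  assumes u: "u \<in> S" and h: "h \<in> H" and hu: "gmul h u \<in> S"
  shows "h = gone"
proof (cases "u = gone")
  case True
  thus ?thesis
    using S_inter_H h hu by simp
next
  case False
  have uG: "u \<in> G" and hG: "h \<in> G"
    using u h S_subset H_subset by auto
  have "gmul h ` {u, ginv u} \<in> P"
    using translate_block[OF h, of "{u, ginv u}"] u by (simp add: S_def)
  moreover have "{gmul h u, ginv (gmul h u)} \<in> P"
    using hu by (simp add: S_def)
  ultimately have "{gmul h u, ginv (gmul h u)} = gmul h ` {u, ginv u}"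
    using block_unique by blast
  hence "ginv (gmul h u) = gmul h u \<or> ginv (gmul h u) = gmul h (ginv u)"
    by auto
  thus ?thesis
  proof
    assume "ginv (gmul h u) = gmul h u"
    hence "gmul h u = gone"
      using ginv_fixed[OF odd gmul_mem[OF hG uG]] by simp
    hence "u = ginv h"
      using ginv_unique[OF p_pos hG] by blast
    hence "u \<in> H"
      using H_inv h by simp
    thus ?thesis
      using S_inter_H u False by blast
  next
    assume "ginv (gmul h u) = gmul h (ginv u)"
    hence "gmul (ginv u) (ginv h) = gmul (ginv u) h"
      unfolding ginv_gmul using gmul_comm by metis
    hence "ginv h = h"
      using gmul_left_cancel[OF p_pos ginv_mem[OF uG]] by blast
    thus ?thesis
      using ginv_fixed[OF odd hG] by blast
  qed
qed

text \<open>Multiplying the class sums of \<open>{u, u\<inverse>}\<close> and \<open>{v, v\<inverse>}\<close>: the partner of \<open>u v\<close> in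
  its block is again one of the four products \<open>u\<^sup>\<plusminus>\<^sup>1 v\<^sup>\<plusminus>\<^sup>1\<close>.\<close>
lemma product_partner:
  assumes u: "u \<in> S" "u \<noteq> gone" and v: "v \<in> S" and w: "{gmul u v, w} \<in> P"
  shows "w \<in> {gmul u v, gmul u (ginv v), gmul (ginv u) v, gmul (ginv u) (ginv v)}"
proof -
  let ?U = "{u, ginv u}" and ?V = "{v, ginv v}"
  have uG: "u \<in> G"
    using u S_subset by blast
  have U: "?U \<in> P" and V: "?V \<in> P"
    using u v by (auto simp: S_def)
  let ?f = "conv G (ind ?U) (ind ?V)"
  have "u \<noteq> ginv u"
    using ginv_fixed[OF odd uG] u(2) by metis
  hence f: "?f z = ind ?V (gmul (ginv u) z) + ind ?V (gmul u z)" for z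
    using conv_ind_pair[OF finite_G block_subset[OF U]] by simp
  have "?f w = ?f (gmul u v)"
    by (rule product_block_constant[OF U V w]) simp_all
  moreover have "ind ?V (gmul (ginv u) (gmul u v)) = 1"
    using ginv_cancel(1)[OF uG] by (simp add: ind_def)
  ultimately have "ind ?V (gmul (ginv u) w) + ind ?V (gmul u w) \<ge> 1"
    using f[of w] f[of "gmul u v"] by (simp add: ind_def)
  hence "gmul (ginv u) w \<in> ?V \<or> gmul u w \<in> ?V"
    by (auto simp: ind_def split: if_splits)
  moreover have "w = gmul u (gmul (ginv u) w)" "w = gmul (ginv u) (gmul u w)"
    using ginv_cancel[OF uG] by simp_all
  ultimately show ?thesis
    by auto
qed

lemma S_mul:
  assumes u: "u \<in> S" and v: "v \<in> S"
  shows "gmul u v \<in> S"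
proof -
  have uG: "u \<in> G" and vG: "v \<in> G"
    using u v S_subset by auto
  have uvG: "gmul u v \<in> G"
    using gmul_mem uG vG by blast
  consider "u = gone" | "v = gone" | "gmul u v \<in> H"
    | "u \<noteq> gone" "v \<noteq> gone" "gmul u v \<notin> H"
    by blast
  thus ?thesis
  proof cases
    case 3
    have "gmul (gmul u v) (ginv u) \<in> S"
      using v ginv_cancel(1)[OF uG, of v] gmul_comm by metis
    hence "gmul u v = gone"
      using S_translate[OF S_inv[OF u] 3] by blast
    thus ?thesis
      using gone_S by simp
  next
    case 4
    obtain w where w: "w \<noteq> gmul u v" "{gmul u v, w} \<in> P"
      using partner_exists[OF uvG 4(3)] by blast
    have wG: "w \<in> G"
      using w(2) block_subset by blast
    have k: "gmul (gmul u v) w \<in> H"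
      using pair_product_in_H w by simp
    from product_partner[OF u 4(1) v w(2)] w(1)
    consider "w = gmul u (ginv v)" | "w = gmul (ginv u) v" | "w = gmul (ginv u) (ginv v)"
      by blast
    thus ?thesis
    proof cases
      case 1
      hence "gmul (gmul u v) w = gmul (gmul u u) (gmul v (ginv v))"
        by (simp add: gmul_def mult_ac)
      hence "u \<in> H"
        using k H_sqrt[OF uG] gmul_ginv[OF p_pos vG] by simp
      thus ?thesis
        using S_inter_H u 4(1) by blast
    next
      case 2
      hence "gmul (gmul u v) w = gmul (gmul v v) (gmul u (ginv u))"
        by (simp add: gmul_def mult_ac)
      hence "v \<in> H"
        using k H_sqrt[OF vG] gmul_ginv[OF p_pos uG] by simp
      thus ?thesis
        using S_inter_H v 4(2) by blast
    next
      case 3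
      thus ?thesis
        using w(2) uvG by (simp add: S_def ginv_gmul)
    qed
  qed (use u v in simp_all)
qed

lemma S_pow: "z \<in> S \<Longrightarrow> gpow z n \<in> S"
  by (induction n) (auto simp: gone_S gpow_Suc S_mul)

text \<open>Every two-element block \<open>{x, y}\<close> is \<open>c {z, z\<inverse>}\<close>, where c is the square root of the
  singular element \<open>x y\<close> and \<open>z = c\<inverse> x\<close>.\<close>
lemma pair_block_decompose:
  assumes A: "{x, y} \<in> P" "x \<noteq> y"
  obtains c z where "c \<in> H" "z \<in> S" "z \<noteq> gone" "{x, y} = {gmul c z, gmul c (ginv z)}"
proof -
  have xG: "x \<in> G" and yG: "y \<in> G"
    using block_subset[OF A(1)] by auto
  define c where "c = gpow (gmul x y) ((p + 1) div 2)"
  have cH: "c \<in> H"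
    unfolding c_def using H_pow pair_product_in_H[OF A] by blast
  have cG: "c \<in> G"
    using H_subset cH by blast
  have cc: "gmul c c = gmul x y"
    unfolding c_def using square_of_sqrt[OF odd gmul_mem[OF xG yG]] .
  define z where "z = gmul (ginv c) x"
  have zG: "z \<in> G"
    unfolding z_def using gmul_mem ginv_mem cG xG by blast
  have x_eq: "gmul c z = x"
    unfolding z_def using ginv_cancel(2)[OF cG] .
  have y_eq: "gmul c (ginv z) = y"
    using cc mu2_nonzero[OF p_pos xG] mu2_nonzero[OF p_pos yG] mu2_nonzero[OF p_pos cG]
    unfolding z_def by (auto simp: gmul_def ginv_def prod_eq_iff field_simps)
  have "gmul (ginv c) ` {x, y} \<in> P"
    using translate_block[OF H_inv[OF cH] A(1)] .
  moreover have "gmul (ginv c) y = ginv z"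
    using ginv_cancel(1)[OF cG, of "ginv z"] y_eq by simp
  hence "gmul (ginv c) ` {x, y} = {z, ginv z}"
    unfolding z_def by simp
  ultimately have zS: "z \<in> S"
    using zG by (simp add: S_def)
  have "z \<noteq> gone"
  proof
    assume "z = gone"
    hence "x \<in> H"
      using x_eq cH by simp
    hence "{x, y} = {x}"
      using block_unique[OF A(1), of "{x}" x] by (simp add: H_def)
    with A(2) show False
      by auto
  qed
  thus ?thesis
    using that cH zS x_eq y_eq by blast
qed

end

section \<open>Exactly p singular blocks, p prime\<close>

locale prime_pair_partition = pair_partition +
  assumes prime: "prime p"
    and card_singular: "card {A \<in> P. singular A} = p"
begin

lemma singular_blocks_eq: "{A \<in> P. singular A} = (\<lambda>x. {x}) ` H"
  by (auto simp: singular_def H_def card_1_singleton_iff)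

lemma card_H: "card H = p"
  using card_singular card_image[of "\<lambda>x. {x}" H] by (simp add: singular_blocks_eq)

lemma finite_H: "finite H"
  using finite_subset[OF _ finite_G] H_subset by blast

text \<open>H has prime order p, so it is generated by any of its nontrivial elements.\<close>
lemma H_generated:
  obtains \<alpha> where "\<alpha> \<in> H" "\<alpha> \<noteq> gone" "H = gpow \<alpha> ` {..<p}"
proof -
  have "H \<noteq> {gone}"
    using card_H prime_ge_2_nat[OF prime] by auto
  then obtain \<alpha> where \<alpha>: "\<alpha> \<in> H" "\<alpha> \<noteq> gone"
    using gone_H by blast
  have "gpow \<alpha> ` {..<p} \<subseteq> H"
    using H_pow[OF \<alpha>(1)] by blast
  moreover have "card (gpow \<alpha> ` {..<p}) = card H"
    using card_image[OF gpow_inj_on[OF prime H_subset[OF \<alpha>(1)] \<alpha>(2)]] card_H by simp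
  ultimately have "H = gpow \<alpha> ` {..<p}"
    using card_subset_eq[OF finite_H] by blast
  thus ?thesis
    using that \<alpha> by blast
qed

text \<open>Since \<open>|H| = p < p\<^sup>2 = |G|\<close> there is a two-element block, hence a nontrivial inverse pair.\<close>
lemma S_nontrivial:
  obtains \<beta> where "\<beta> \<in> S" "\<beta> \<noteq> gone"
proof -
  have "card H < card G"
    using card_H card_mu2[OF p_pos] prime_ge_2_nat[OF prime] by simp
  hence "\<not> G \<subseteq> H"
    using card_mono[OF finite_H] by (meson not_le)
  then obtain x where x: "x \<in> G" "x \<notin> H"
    by blast
  obtain y where "y \<noteq> x" "{x, y} \<in> P"
    using partner_exists[OF x] .
  thus ?thesis
    using that pair_block_decompose by metis
qed

text \<open>Since \<open>S \<inter> H = {1}\<close>, a product \<open>h s\<close> with \<open>h \<in> H\<close>, \<open>s \<in> S\<close> determines s.\<close>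
lemma HS_unique:
  assumes "h \<in> H" "h' \<in> H" "s \<in> S" "s' \<in> S" "gmul h s = gmul h' s'"
  shows "s = s'"
proof -
  have G: "h \<in> G" "h' \<in> G" "s \<in> G" "s' \<in> G"
    using assms H_subset S_subset by auto
  have "gmul s (ginv s') = gmul (ginv h) h'"
    using assms(5) mu2_nonzero[OF p_pos] G
    by (auto simp: gmul_def ginv_def prod_eq_iff field_simps)
  moreover have "gmul s (ginv s') \<in> S" "gmul (ginv h) h' \<in> H"
    using assms S_mul S_inv H_mul H_inv by auto
  ultimately have "gmul s (ginv s') = gone"
    using S_inter_H by metis
  hence "ginv s' = ginv s"
    using ginv_unique[OF p_pos G(3)] by blast
  thus ?thesis
    by (metis ginv_ginv)
qed

context
  fixes \<alpha> \<beta> :: elt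
  assumes alpha: "\<alpha> \<in> H" "\<alpha> \<noteq> gone" "H = gpow \<alpha> ` {..<p}"
    and beta: "\<beta> \<in> S" "\<beta> \<noteq> gone"
begin

lemma alpha_G: "\<alpha> \<in> G" and beta_G: "\<beta> \<in> G"
  using alpha(1) beta(1) H_subset S_subset by blast+

text \<open>G is the internal direct product of \<open>\<langle>\<alpha>\<rangle> = H\<close> and \<open>\<langle>\<beta>\<rangle>\<close>: the \<open>p\<^sup>2\<close> products
  \<open>\<alpha>\<^sup>a \<beta>\<^sup>b\<close> (a, b < p) are distinct, so they exhaust G.\<close>
lemma G_product_decomposition:
  "(\<lambda>(a, b). gmul (gpow \<alpha> a) (gpow \<beta> b)) ` ({..<p} \<times> {..<p}) = G"
proof (rule card_subset_eq[OF finite_G])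
  let ?F = "\<lambda>(a, b). gmul (gpow \<alpha> a) (gpow \<beta> b)"
  have inj: "inj_on ?F ({..<p} \<times> {..<p})"
  proof (rule inj_onI, clarify)
    fix a b a' b'
    assume ab: "a < p" "b < p" "a' < p" "b' < p"
      and eq: "gmul (gpow \<alpha> a) (gpow \<beta> b) = gmul (gpow \<alpha> a') (gpow \<beta> b')"
    have "gpow \<beta> b = gpow \<beta> b'"
      using HS_unique[OF H_pow[OF alpha(1)] H_pow[OF alpha(1)] S_pow[OF beta(1)] S_pow[OF beta(1)] eq] .
    hence "b = b'"
      using inj_onD[OF gpow_inj_on[OF prime beta_G beta(2)]] ab by simp
    hence "gpow \<alpha> a = gpow \<alpha> a'"
      using eq gmul_left_cancel[OF p_pos gpow_mem[OF beta_G]] by (simp add: gmul_comm)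
    hence "a = a'"
      using inj_onD[OF gpow_inj_on[OF prime alpha_G alpha(2)]] ab by simp
    thus "a = a' \<and> b = b'"
      using \<open>b = b'\<close> by simp
  qed
  show "card (?F ` ({..<p} \<times> {..<p})) = card G"
    using card_image[OF inj] card_mu2[OF p_pos] by (simp add: card_cartesian_product)
  show "?F ` ({..<p} \<times> {..<p}) \<subseteq> G"
    using alpha_G beta_G by (auto intro!: gmul_mem gpow_mem)
qed

lemma S_powers:
  assumes "z \<in> S"
  obtains j where "j < p" "z = gpow \<beta> j"
proof -
  have "z \<in> (\<lambda>(a, b). gmul (gpow \<alpha> a) (gpow \<beta> b)) ` ({..<p} \<times> {..<p})"
    using G_product_decomposition S_subset[OF assms] by simp
  then obtain a j where aj: "j < p" "gmul gone z = gmul (gpow \<alpha> a) (gpow \<beta> j)"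
    by auto
  have "z = gpow \<beta> j"
    by (rule HS_unique[OF gone_H H_pow[OF alpha(1)] assms S_pow[OF beta(1)] aj(2)])
  thus ?thesis
    using that aj(1) by blast
qed

lemma singular_blocks: "{A \<in> P. singular A} = {{gpow \<alpha> i} | i. i \<le> p - 1}"
proof -
  have "{..<p} = {i. i \<le> p - 1}"
    using p_pos by auto
  thus ?thesis
    unfolding singular_blocks_eq alpha(3) by (simp add: setcompr_eq_image image_image)
qed

lemma nonsingular_blocks:
  "{A \<in> P. \<not> singular A} =
     {{gmul (gpow \<alpha> i) (gpow \<beta> j), gmul (gpow \<alpha> i) (gpow (ginv \<beta>) j)} | i j.
        i \<le> p - 1 \<and> 1 \<le> j \<and> j \<le> p - 1}" (is "?L = ?R")
proof
  show "?L \<subseteq> ?R"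
  proof
    fix B assume "B \<in> ?L"
    hence B: "B \<in> P" "card B = 2"
      using small_blocks by auto
    then obtain x y where xy: "B = {x, y}" "x \<noteq> y"
      by (auto simp: card_2_iff)
    obtain c z where cz: "c \<in> H" "z \<in> S" "z \<noteq> gone" "{x, y} = {gmul c z, gmul c (ginv z)}"
      by (rule pair_block_decompose[OF B(1)[unfolded xy(1)] xy(2)])
    obtain i where i: "i < p" "c = gpow \<alpha> i"
      using cz(1) alpha(3) by blast
    obtain j where j: "j < p" "z = gpow \<beta> j"
      using S_powers[OF cz(2)] .
    have "B = {gmul (gpow \<alpha> i) (gpow \<beta> j), gmul (gpow \<alpha> i) (gpow (ginv \<beta>) j)}"
      using xy(1) cz(4) i(2) j(2) by (simp add: gpow_ginv)
    moreover have "j \<noteq> 0"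
      using j(2) cz(3) gpow_0 by metis
    hence "i \<le> p - 1" "1 \<le> j" "j \<le> p - 1"
      using i(1) j(1) by auto
    ultimately show "B \<in> ?R"
      by blast
  qed
next
  show "?R \<subseteq> ?L"
  proof
    fix B assume "B \<in> ?R"
    then obtain i j where ij: "1 \<le> j" "j < p"
      and B: "B = {gmul (gpow \<alpha> i) (gpow \<beta> j), gmul (gpow \<alpha> i) (gpow (ginv \<beta>) j)}"
      using p_pos by auto
    define z where "z = gpow \<beta> j"
    have zS: "z \<in> S"
      unfolding z_def using S_pow[OF beta(1)] .
    have "z \<noteq> gone"
    proof
      assume "z = gone"
      hence "gpow \<beta> j = gpow \<beta> 0"
        by (simp add: z_def)
      hence "j = 0"
        by (rule inj_onD[OF gpow_inj_on[OF prime beta_G beta(2)]]) (use ij p_pos in auto)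
      with ij(1) show False
        by simp
    qed
    hence "ginv z \<noteq> z"
      using ginv_fixed[OF odd S_subset[OF zS]] by blast
    hence "gmul (gpow \<alpha> i) z \<noteq> gmul (gpow \<alpha> i) (ginv z)"
      using gmul_left_cancel[OF p_pos gpow_mem[OF alpha_G]] by metis
    moreover have B_eq: "B = gmul (gpow \<alpha> i) ` {z, ginv z}"
      using B by (simp add: z_def gpow_ginv)
    ultimately have "card B = 2"
      by simp
    moreover have "B \<in> P"
      unfolding B_eq using translate_block[OF H_pow[OF alpha(1)], of "{z, ginv z}" i] zS
      by (simp add: S_def)
    ultimately show "B \<in> ?L"
      by (simp add: singular_def)
  qed
qed

end

end

theorem theorem4p1:
  fixes p :: nat and P :: "elt set set"
  assumes "prime p" and "odd p"
    and "fusion_partition (mu2 p) P"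
    and "card {A \<in> P. singular A} = p"
    and "\<forall>A\<in>P. \<not> singular A \<longrightarrow> card A = 2"
  shows "\<exists>\<alpha>\<in>mu2 p. \<exists>\<beta>\<in>mu2 p.
     {A \<in> P. singular A} = {{gpow \<alpha> i} | i. i \<le> p - 1} \<and>
     {A \<in> P. \<not> singular A} =
       {{gmul (gpow \<alpha> i) (gpow \<beta> j), gmul (gpow \<alpha> i) (gpow (ginv \<beta>) j)} | i j.
          i \<le> p - 1 \<and> 1 \<le> j \<and> j \<le> p - 1}"
proof -
  interpret prime_pair_partition p P
    using assms by unfold_locales (simp_all add: fusion_partition_def)
  obtain \<alpha> where \<alpha>: "\<alpha> \<in> H" "\<alpha> \<noteq> gone" "H = gpow \<alpha> ` {..<p}"
    by (rule H_generated)
  obtain \<beta> where \<beta>: "\<beta> \<in> S" "\<beta> \<noteq> gone"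
    by (rule S_nontrivial)
  show ?thesis
    using alpha_G[OF \<alpha> \<beta>] beta_G[OF \<alpha> \<beta>]
    by (intro bexI[of _ \<alpha>] bexI[of _ \<beta>] conjI singular_blocks[OF \<alpha> \<beta>]
        nonsingular_blocks[OF \<alpha> \<beta>])
qed

end
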